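(* Let $n\ge2$, $\xi_n=\frac{n+1}{n-1}$, $\rho\in\mathbb{C}\setminus\{-\xi_n,-1,1,\xi_n\}$, $z_k\in\mathbb{C}\setminus\{0\}$, and let $\mu_k\in\mathbb{C}$ satisfy $z_k=\exp(i\mu_k)$. Then: (i) $z_k$ is a type-1 zero of $p_{2n}(\rho,z)$ iff $z_k\neq\pm1$ (i.e. $\mu_k\notin\pi\mathbb{Z}$) and $$\sin\frac{\mu_k(n+1)}{2}-\rho\sin\frac{\mu_k(n-1)}{2}=0.$$ In this case the corresponding type-1 eigenvalue is $$\lambda_k=\frac{1-\rho^2}{1-2\rho\cos\mu_k+\rho^2}=-\frac{\sin(n\mu_k)}{\sin\mu_k},$$ and the vector $\mathbf{y}_k$ with entries $y_{kj}=\sin\left[\mu_k\left(j-\frac{n-1}{2}\right)\right]$, $j=0,1,\dots,n-1$, is an eigenvector of $K_n(\rho)$ for $\lambda_k$. (ii) $z_k$ is a type-2 zero of $p_{2n}(\rho,z)$ iff $z_k\neq\pm1$ (i.e. $\mu_k\notin\pi\mathbb{Z}$) and $$\cos\frac{\mu_k(n+1)}{2}-\rho\cos\frac{\mu_k(n-1)}{2}=0.$$ In this case the corresponding type-2 eigenvalue is $$\lambda_k=\frac{1-\rho^2}{1-2\rho\cos\mu_k+\rho^2}=\frac{\sin(n\mu_k)}{\sin\mu_k},$$ and the vector $\mathbf{y}_k$ with entries $y_{kj}=\cos\left[\mu_k\left(j-\frac{n-1}{2}\right)\right]$, $j=0,1,\dots,n-1$, is an eigenvector of $K_n(\rho)$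 for $\lambda_k$.
   Context: $K_n(\rho)=\left[\rho^{|j-k|}\right]_{j,k=1}^n$ (with $\rho^0=1$). $p_{2n}(\rho,z)=z^{2n}+(1+\rho^2)\sum_{k=1}^{n-1}z^{2k}-2\rho\sum_{k=0}^{n-1}z^{2k+1}+1$; $s_{n+1}(\rho,z)=z^{n+1}-\rho z^n+\rho z-1$; $c_{n+1}(\rho,z)=z^{n+1}-\rho z^n-\rho z+1$. For such $\rho$, a zero $z$ of $p_{2n}(\rho,\cdot)$ is a type-1 zero if $s_{n+1}(\rho,z)=s_{n+1}(\rho,z^{-1})=0$ and a type-2 zero if $c_{n+1}(\rho,z)=c_{n+1}(\rho,z^{-1})=0$; every zero is of exactly one type. The eigenvalue corresponding to a zero $z$ is $\frac{z(1-\rho^2)}{(z-\rho)(1-\rho z)}$, and it is called type-1 or type-2 according to the type of $z$. *)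

theory Defs
  imports Complex_Main "Jordan_Normal_Form.Char_Poly"
begin

text \<open>The Kac-Murdock-Szego matrix K_n(rho) = [rho^|j-k|], rows/columns indexed 0..n-1
  (a shift of the paper's 1..n indexing; rho^0 = 1).\<close>
definition KMS :: "nat \<Rightarrow> complex \<Rightarrow> complex mat" where
  "KMS n \<rho> = mat n n (\<lambda>(j, k). \<rho> ^ (if j \<le> k then k - j else j - k))"

definition p2n :: "nat \<Rightarrow> complex \<Rightarrow> complex \<Rightarrow> complex" where
  "p2n n \<rho> z = z ^ (2*n) + (1 + \<rho>^2) * (\<Sum>k=1..n-1. z ^ (2*k))
     - 2 * \<rho> * (\<Sum>k=0..n-1. z ^ (2*k+1)) + 1"

definition s_poly :: "nat \<Rightarrow> complex \<Rightarrow> complex \<Rightarrow> complex" where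
  "s_poly n \<rho> z = z ^ (n+1) - \<rho> * z ^ n + \<rho> * z - 1"

definition c_poly :: "nat \<Rightarrow> complex \<Rightarrow> complex \<Rightarrow> complex" where
  "c_poly n \<rho> z = z ^ (n+1) - \<rho> * z ^ n - \<rho> * z + 1"

definition type1_zero :: "nat \<Rightarrow> complex \<Rightarrow> complex \<Rightarrow> bool" where
  "type1_zero n \<rho> z \<longleftrightarrow> p2n n \<rho> z = 0 \<and> s_poly n \<rho> z = 0 \<and> s_poly n \<rho> (inverse z) = 0"

definition type2_zero :: "nat \<Rightarrow> complex \<Rightarrow> complex \<Rightarrow> bool" where
  "type2_zero n \<rho> z \<longleftrightarrow> p2n n \<rho> z = 0 \<and> c_poly n \<rho> z = 0 \<and> c_poly n \<rho> (inverse z) = 0"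

definition zero_eigval :: "complex \<Rightarrow> complex \<Rightarrow> complex" where
  "zero_eigval \<rho> z = z * (1 - \<rho>^2) / ((z - \<rho>) * (1 - \<rho> * z))"

end

(*
  Every row of K_n(rho) acts on a geometric vector (t^k) by
    sum_k rho^|j-k| t^k = lambda(t) t^j - rho^(j+1)/(t - rho) - rho^(n-j) t^n/(1 - rho t),
  where lambda(t) = t(1 - rho^2)/((t - rho)(1 - rho t)) is invariant under t -> 1/t.
  Hence for v_j = z^j -+ z^(n-1-j) both boundary terms cancel exactly when
  z^n (z - rho) = +-(1 - rho z), i.e. when z is a zero of s_(n+1) or c_(n+1), and then
  K_n(rho) v = lambda(z) v; up to the factor exp(-i mu (n-1)/2) these v are the sine and
  cosine vectors centred at (n-1)/2.  The factorisation (z^2 - 1) p_2n = s_(n+1) c_(n+1),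
  with s_(n+1) and c_(n+1) (anti-)self-reciprocal, identifies these zeros with the type-1
  and type-2 zeros of p_2n once z = +-1 is excluded, and the hypothesis on rho says exactly
  that p_2n(+-1) <> 0.
*)
theory Submission
  imports Defs "HOL-Analysis.Complex_Transcendental"
begin

hide_const (open) Finite_Cartesian_Product.vec
unbundle no vec_syntax

lemma p2n_factorization:
  fixes z \<rho> :: complex
  assumes "n \<ge> 1"
  shows "(z^2 - 1) * p2n n \<rho> z = s_poly n \<rho> z * c_poly n \<rho> z"
proof -
  obtain m where n: "n = Suc m" using assms by (cases n) auto
  define G where "G = (\<Sum>k<m. (z^2)^k)"
  have G: "(z^2 - 1) * G = z^(2*m) - 1"
    unfolding G_def by (simp add: power_diff_1_eq power_mult)
  have even: "(\<Sum>k=1..n-1. z^(2*k)) = z^2 * G"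
    unfolding G_def n by (simp add: sum.atLeast1_atMost_eq sum_distrib_left power_mult)
  have odd: "(\<Sum>k=0..n-1. z^(2*k+1)) = z * (G + z^(2*m))"
    unfolding G_def n by (simp add: atLeast0AtMost lessThan_Suc_atMost[symmetric] sum_distrib_left distrib_left power_mult)
  have "(z^2 - 1) * p2n n \<rho> z = (z^2 - 1) * z^(2*n) + (1 + \<rho>^2) * z^2 * ((z^2 - 1) * G)
      - 2 * \<rho> * z * ((z^2 - 1) * G + (z^2 - 1) * z^(2*m)) + (z^2 - 1)"
    unfolding p2n_def even odd by (simp add: algebra_simps)
  also have "\<dots> = s_poly n \<rho> z * c_poly n \<rho> z"
    unfolding G s_poly_def c_poly_def n by (simp add: power_mult_distrib power_add power_mult algebra_simps power2_eq_square)
  finally show ?thesis .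
qed

lemma p2n_one:
  fixes \<rho> :: complex
  assumes "n \<ge> 1"
  shows "p2n n \<rho> 1 = (\<rho> - 1) * (of_nat (n-1) * \<rho> - of_nat (n+1))"
  using assms by (simp add: p2n_def of_nat_diff algebra_simps power2_eq_square)

lemma p2n_minus_one:
  fixes \<rho> :: complex
  assumes "n \<ge> 1"
  shows "p2n n \<rho> (-1) = (\<rho> + 1) * (of_nat (n-1) * \<rho> + of_nat (n+1))"
  using assms by (simp add: p2n_def power_mult of_nat_diff algebra_simps power2_eq_square)

lemma p2n_pm_one_nonzero:
  fixes \<rho> :: complex
  assumes "n \<ge> 2"
    and "\<rho> \<notin> {- (of_nat (n+1) / of_nat (n-1)), -1, 1, of_nat (n+1) / of_nat (n-1)}"
  shows "p2n n \<rho> 1 \<noteq> 0" and "p2n n \<rho> (-1) \<noteq> 0"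
proof -
  have "(of_nat (n-1) :: complex) \<noteq> 0" using assms(1) by simp
  then have "of_nat (n-1) * \<rho> \<noteq> of_nat (n+1)" and "of_nat (n-1) * \<rho> \<noteq> - of_nat (n+1)"
    using assms(2) by (auto simp: field_simps)
  then show "p2n n \<rho> 1 \<noteq> 0" and "p2n n \<rho> (-1) \<noteq> 0"
    using assms by (auto simp: p2n_one p2n_minus_one add_eq_0_iff2)
qed

lemma s_poly_inverse:
  fixes z \<rho> :: complex
  assumes "z \<noteq> 0"
  shows "s_poly n \<rho> (inverse z) = - s_poly n \<rho> z / z^(n+1)"
  using assms by (simp add: s_poly_def power_inverse field_simps)

lemma c_poly_inverse:
  fixes z \<rho> :: complex
  assumes "z \<noteq> 0"
  shows "c_poly n \<rho> (inverse z) = c_poly n \<rho> z / z^(n+1)"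
  using assms by (simp add: c_poly_def power_inverse field_simps)

lemma type1_zero_iff:
  fixes z \<rho> :: complex
  assumes "n \<ge> 1" "z \<noteq> 0" "p2n n \<rho> 1 \<noteq> 0" "p2n n \<rho> (-1) \<noteq> 0"
  shows "type1_zero n \<rho> z \<longleftrightarrow> z \<noteq> 1 \<and> z \<noteq> -1 \<and> s_poly n \<rho> z = 0"
proof
  assume "type1_zero n \<rho> z"
  then show "z \<noteq> 1 \<and> z \<noteq> -1 \<and> s_poly n \<rho> z = 0"
    using assms(3,4) unfolding type1_zero_def by auto
next
  assume z: "z \<noteq> 1 \<and> z \<noteq> -1 \<and> s_poly n \<rho> z = 0"
  then have "z^2 - 1 \<noteq> 0" by (simp add: power2_eq_1_iff)
  then have "p2n n \<rho> z = 0"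
    using p2n_factorization[OF assms(1), of z \<rho>] z by simp
  then show "type1_zero n \<rho> z"
    using z assms(2) by (simp add: type1_zero_def s_poly_inverse)
qed

lemma type2_zero_iff:
  fixes z \<rho> :: complex
  assumes "n \<ge> 1" "z \<noteq> 0" "p2n n \<rho> 1 \<noteq> 0" "p2n n \<rho> (-1) \<noteq> 0"
  shows "type2_zero n \<rho> z \<longleftrightarrow> z \<noteq> 1 \<and> z \<noteq> -1 \<and> c_poly n \<rho> z = 0"
proof
  assume "type2_zero n \<rho> z"
  then show "z \<noteq> 1 \<and> z \<noteq> -1 \<and> c_poly n \<rho> z = 0"
    using assms(3,4) unfolding type2_zero_def by auto
next
  assume z: "z \<noteq> 1 \<and> z \<noteq> -1 \<and> c_poly n \<rho> z = 0"
  then have "z^2 - 1 \<noteq> 0" by (simp add: power2_eq_1_iff)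
  then have "p2n n \<rho> z = 0"
    using p2n_factorization[OF assms(1), of z \<rho>] z by simp
  then show "type2_zero n \<rho> z"
    using z assms(2) by (simp add: type2_zero_def c_poly_inverse)
qed

lemma exp_mult_sin: "2 * \<i> * exp a * sin b = exp (a + \<i> * b) - exp (a - \<i> * b)"
  by (simp add: sin_exp_eq exp_add exp_diff exp_minus field_simps)

lemma exp_mult_cos: "2 * exp a * cos b = exp (a + \<i> * b) + exp (a - \<i> * b)"
  by (simp add: cos_exp_eq exp_add exp_diff exp_minus field_simps)

lemma exp_half_angle_sums:
  fixes \<mu> :: complex
  assumes "n \<ge> 1"
  defines "x \<equiv> \<mu> * of_nat (n+1) / 2" and "y \<equiv> \<mu> * of_nat (n-1) / 2"
  shows "exp (\<i> * x + \<i> * x) = exp (\<i> * \<mu>) ^ (n+1)"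
    and "exp (\<i> * x + \<i> * y) = exp (\<i> * \<mu>) ^ n"
    and "exp (\<i> * x - \<i> * y) = exp (\<i> * \<mu>)"
proof -
  have "\<i> * x + \<i> * x = of_nat (n+1) * (\<i> * \<mu>)" "\<i> * x + \<i> * y = of_nat n * (\<i> * \<mu>)"
       "\<i> * x - \<i> * y = \<i> * \<mu>"
    unfolding x_def y_def using assms by (simp_all add: of_nat_diff field_simps)
  then show "exp (\<i> * x + \<i> * x) = exp (\<i> * \<mu>) ^ (n+1)"
    and "exp (\<i> * x + \<i> * y) = exp (\<i> * \<mu>) ^ n"
    and "exp (\<i> * x - \<i> * y) = exp (\<i> * \<mu>)"
    by (simp_all only: exp_of_nat_mult)
qed

lemma s_poly_exp:
  fixes \<rho> \<mu> :: complex
  assumes "n \<ge> 1"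
  shows "s_poly n \<rho> (exp (\<i> * \<mu>)) = 2 * \<i> * exp (\<i> * (\<mu> * of_nat (n+1) / 2))
           * (sin (\<mu> * of_nat (n+1) / 2) - \<rho> * sin (\<mu> * of_nat (n-1) / 2))"
    (is "_ = 2 * \<i> * exp (\<i> * ?x) * (sin ?x - \<rho> * sin ?y)")
proof -
  have "2 * \<i> * exp (\<i> * ?x) * (sin ?x - \<rho> * sin ?y)
      = 2 * \<i> * exp (\<i> * ?x) * sin ?x - \<rho> * (2 * \<i> * exp (\<i> * ?x) * sin ?y)"
    by (simp add: algebra_simps)
  also have "\<dots> = (exp (\<i> * ?x + \<i> * ?x) - 1) - \<rho> * (exp (\<i> * ?x + \<i> * ?y) - exp (\<i> * ?x - \<i> * ?y))"
    unfolding exp_mult_sin by simp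
  also have "\<dots> = s_poly n \<rho> (exp (\<i> * \<mu>))"
    unfolding exp_half_angle_sums[OF assms] s_poly_def by (simp add: algebra_simps)
  finally show ?thesis by (rule sym)
qed

lemma c_poly_exp:
  fixes \<rho> \<mu> :: complex
  assumes "n \<ge> 1"
  shows "c_poly n \<rho> (exp (\<i> * \<mu>)) = 2 * exp (\<i> * (\<mu> * of_nat (n+1) / 2))
           * (cos (\<mu> * of_nat (n+1) / 2) - \<rho> * cos (\<mu> * of_nat (n-1) / 2))"
    (is "_ = 2 * exp (\<i> * ?x) * (cos ?x - \<rho> * cos ?y)")
proof -
  have "2 * exp (\<i> * ?x) * (cos ?x - \<rho> * cos ?y)
      = 2 * exp (\<i> * ?x) * cos ?x - \<rho> * (2 * exp (\<i> * ?x) * cos ?y)"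
    by (simp add: algebra_simps)
  also have "\<dots> = (exp (\<i> * ?x + \<i> * ?x) + 1) - \<rho> * (exp (\<i> * ?x + \<i> * ?y) + exp (\<i> * ?x - \<i> * ?y))"
    unfolding exp_mult_cos by simp
  also have "\<dots> = c_poly n \<rho> (exp (\<i> * \<mu>))"
    unfolding exp_half_angle_sums[OF assms] c_poly_def by (simp add: algebra_simps)
  finally show ?thesis by (rule sym)
qed

lemma zero_eigval_partial_fractions:
  fixes t \<rho> :: complex
  assumes "t \<noteq> \<rho>" "\<rho> * t \<noteq> 1"
  shows "zero_eigval \<rho> t = \<rho> / (t - \<rho>) + 1 / (1 - \<rho> * t)"
  using assms by (simp add: zero_eigval_def field_simps power2_eq_square)

lemma zero_eigval_inverse:
  fixes z \<rho> :: complex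
  assumes "z \<noteq> 0"
  shows "zero_eigval \<rho> (inverse z) = zero_eigval \<rho> z"
proof -
  have "(inverse z - \<rho>) * (1 - \<rho> * inverse z) = (z - \<rho>) * (1 - \<rho> * z) / z^2"
    using assms by (simp add: field_simps power2_eq_square)
  then have "zero_eigval \<rho> (inverse z) = inverse z * (1 - \<rho>^2) * z^2 / ((z - \<rho>) * (1 - \<rho> * z))"
    unfolding zero_eigval_def by (simp add: divide_divide_eq_right)
  then show ?thesis
    using assms by (simp add: zero_eigval_def power2_eq_square)
qed

lemma KMS_row_sum_powers:
  fixes t \<rho> :: complex
  assumes "j < n" "t \<noteq> \<rho>" "\<rho> * t \<noteq> 1"
  shows "(\<Sum>k<n. \<rho> ^ (if j \<le> k then k - j else j - k) * t ^ k)
       = zero_eigval \<rho> t * t ^ j - \<rho> ^ (j+1) / (t - \<rho>) - \<rho> ^ (n-j) * t ^ n / (1 - \<rho> * t)"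
proof -
  have nz: "t - \<rho> \<noteq> 0" "1 - \<rho> * t \<noteq> 0"
    using assms(2,3) by auto
  have lower: "(\<Sum>k<j. \<rho> ^ (j-k) * t ^ k) = \<rho> * (t ^ j - \<rho> ^ j) / (t - \<rho>)"
  proof -
    have "(\<Sum>k<j. \<rho> ^ (j-k) * t ^ k) = \<rho> * (\<Sum>k<j. \<rho> ^ (j - Suc k) * t ^ k)"
      by (auto simp: sum_distrib_left mult.assoc[symmetric] Suc_diff_Suc simp flip: power_Suc
               intro!: sum.cong)
    then show ?thesis
      using nz by (simp add: eq_divide_eq power_diff_sumr2[of t j \<rho>] ac_simps)
  qed
  have upper: "(\<Sum>k\<in>{j..<n}. \<rho> ^ (k-j) * t ^ k) = (t ^ j - \<rho> ^ (n-j) * t ^ n) / (1 - \<rho> * t)"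
  proof -
    have "(\<Sum>k\<in>{j..<n}. \<rho> ^ (k-j) * t ^ k) = t ^ j * (\<Sum>i<n-j. (\<rho> * t) ^ i)"
      by (simp add: sum.atLeastLessThan_shift_0[of _ j n] atLeast0LessThan sum_distrib_left
                    power_add power_mult_distrib ac_simps)
    also have "(1 - \<rho> * t) * \<dots> = t ^ j * (1 - (\<rho> * t) ^ (n-j))"
      by (simp add: one_diff_power_eq)
    also have "\<dots> = t ^ j - \<rho> ^ (n-j) * t ^ n"
      using assms(1) by (simp add: power_mult_distrib algebra_simps flip: power_add)
    finally show ?thesis
      using nz by (simp add: eq_divide_eq ac_simps)
  qed
  have "(\<Sum>k<n. \<rho> ^ (if j \<le> k then k - j else j - k) * t ^ k)
      = (\<Sum>k<j. \<rho> ^ (j-k) * t ^ k) + (\<Sum>k\<in>{j..<n}. \<rho> ^ (k-j) * t ^ k)"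
    unfolding lessThan_atLeast0
      sum.atLeastLessThan_concat[of 0 j n, symmetric, OF _ less_imp_le[OF assms(1)], simplified]
    by (intro arg_cong2[where f = "(+)"] sum.cong) auto
  also have "\<dots> = zero_eigval \<rho> t * t ^ j - \<rho> ^ (j+1) / (t - \<rho>) - \<rho> ^ (n-j) * t ^ n / (1 - \<rho> * t)"
    unfolding lower upper zero_eigval_partial_fractions[OF assms(2,3)]
    by (simp add: diff_divide_distrib add_divide_distrib algebra_simps)
  finally show ?thesis .
qed

lemma boundary_condition_nondegenerate:
  fixes z \<rho> e :: complex
  assumes "\<rho>^2 \<noteq> 1" "e \<noteq> 0" "z^n * (z - \<rho>) = e * (1 - \<rho> * z)"
  shows "z \<noteq> \<rho>" and "\<rho> * z \<noteq> 1"
proof -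
  show "z \<noteq> \<rho>"
  proof
    assume "z = \<rho>"
    then have "e * (1 - \<rho>^2) = 0" using assms(3) by (simp add: power2_eq_square)
    then show False using assms(1,2) by simp
  qed
  then show "\<rho> * z \<noteq> 1"
    using assms(3) by (auto simp: power_0_left split: if_splits)
qed

lemma reflected_boundary_terms_cancel:
  fixes z \<rho> e :: complex
  assumes "n \<ge> 1" "z \<noteq> 0" "z \<noteq> \<rho>" "\<rho> * z \<noteq> 1"
    and cond: "z^n * (z - \<rho>) = e * (1 - \<rho> * z)" and "e^2 = 1"
  shows "e * z^(n-1) / (inverse z - \<rho>) = 1 / (z - \<rho>)"
    and "e * z^(n-1) * inverse z ^ n / (1 - \<rho> * inverse z) = z^n / (1 - \<rho> * z)"
proof -
  have nz: "z - \<rho> \<noteq> 0" "1 - \<rho> * z \<noteq> 0"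
    using assms(3,4) by auto
  have zn1: "z * z^(n-1) = z^n"
    using assms(1) by (cases n) auto
  have zn: "z^n = e * (1 - \<rho> * z) / (z - \<rho>)"
    using cond nz by (simp add: eq_divide_eq)
  have "e * z^n * (z - \<rho>) = e^2 * (1 - \<rho> * z)"
    using cond by (simp add: power2_eq_square mult.assoc)
  then have ezn: "e * z^n = (1 - \<rho> * z) / (z - \<rho>)"
    using nz assms(6) by (simp add: eq_divide_eq)
  have "inverse z - \<rho> = (1 - \<rho> * z) / z"
    using assms(2) by (simp add: field_simps)
  then have "e * z^(n-1) / (inverse z - \<rho>) = e * (z * z^(n-1)) / (1 - \<rho> * z)"
    by (simp add: divide_divide_eq_right ac_simps)
  also have "\<dots> = 1 / (z - \<rho>)"
    unfolding zn1 ezn using nz by simp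
  finally show "e * z^(n-1) / (inverse z - \<rho>) = 1 / (z - \<rho>)" .
  have "1 - \<rho> * inverse z = (z - \<rho>) / z"
    using assms(2) by (simp add: field_simps)
  then have "e * z^(n-1) * inverse z ^ n / (1 - \<rho> * inverse z)
      = e * (z * z^(n-1)) * inverse z ^ n / (z - \<rho>)"
    by (simp add: divide_divide_eq_right ac_simps)
  also have "\<dots> = e / (z - \<rho>)"
    unfolding zn1 using assms(2) by (simp add: power_inverse)
  also have "\<dots> = z^n / (1 - \<rho> * z)"
    unfolding zn using nz by simp
  finally show "e * z^(n-1) * inverse z ^ n / (1 - \<rho> * inverse z) = z^n / (1 - \<rho> * z)" .
qed

lemma KMS_mult_reflected_powers:
  fixes z \<rho> e :: complex
  assumes "z \<noteq> 0" "z \<noteq> \<rho>" "\<rho> * z \<noteq> 1"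
    and cond: "z^n * (z - \<rho>) = e * (1 - \<rho> * z)" and "e^2 = 1"
  shows "KMS n \<rho> *\<^sub>v vec n (\<lambda>j. z^j - e * z^(n-1-j))
       = zero_eigval \<rho> z \<cdot>\<^sub>v vec n (\<lambda>j. z^j - e * z^(n-1-j))"
proof (rule eq_vecI)
  fix j assume "j < dim_vec (zero_eigval \<rho> z \<cdot>\<^sub>v vec n (\<lambda>j. z^j - e * z^(n-1-j)))"
  then have j: "j < n" by simp
  define w where "w = inverse z"
  define r where "r = (\<lambda>k. \<rho> ^ (if j \<le> k then k - j else j - k))"
  have w: "w \<noteq> \<rho>" "\<rho> * w \<noteq> 1"
    using assms(1-3) by (auto simp: w_def field_simps)
  have reflect: "z^(n-1-k) = z^(n-1) * w^k" if "k < n" for k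
    using that assms(1) by (simp add: w_def power_diff power_inverse field_simps)
  have "n \<ge> 1" using j by simp
  note boundary = reflected_boundary_terms_cancel[OF this assms, folded w_def]
  have "(KMS n \<rho> *\<^sub>v vec n (\<lambda>j. z^j - e * z^(n-1-j))) $ j = (\<Sum>k<n. r k * (z^k - e * z^(n-1-k)))"
    using j by (simp add: KMS_def r_def scalar_prod_def lessThan_atLeast0)
  also have "\<dots> = (\<Sum>k<n. r k * z^k - e * z^(n-1) * (r k * w^k))"
    by (intro sum.cong refl) (subst reflect, simp_all add: algebra_simps)
  also have "\<dots> = (\<Sum>k<n. r k * z^k) - e * z^(n-1) * (\<Sum>k<n. r k * w^k)"
    by (simp add: sum_subtractf sum_distrib_left)
  also have "\<dots> = zero_eigval \<rho> z * (z^j - e * z^(n-1) * w^j)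
      - \<rho>^(j+1) * (1 / (z - \<rho>) - e * z^(n-1) / (w - \<rho>))
      - \<rho>^(n-j) * (z^n / (1 - \<rho> * z) - e * z^(n-1) * w^n / (1 - \<rho> * w))"
    unfolding r_def KMS_row_sum_powers[OF j assms(2,3)] KMS_row_sum_powers[OF j w]
      zero_eigval_inverse[OF assms(1), folded w_def]
    by (simp add: algebra_simps diff_divide_distrib)
  also have "\<dots> = zero_eigval \<rho> z * (z^j - e * z^(n-1-j))"
    unfolding boundary reflect[OF j] by simp
  also have "\<dots> = (zero_eigval \<rho> z \<cdot>\<^sub>v vec n (\<lambda>j. z^j - e * z^(n-1-j))) $ j"
    using j by simp
  finally show "(KMS n \<rho> *\<^sub>v vec n (\<lambda>j. z^j - e * z^(n-1-j))) $ j
      = (zero_eigval \<rho> z \<cdot>\<^sub>v vec n (\<lambda>j. z^j - e * z^(n-1-j))) $ j" .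
qed (simp add: KMS_def)

lemma reflected_powers_nonzero:
  fixes z e :: complex
  assumes "n \<ge> 2" "z^2 \<noteq> 1"
  shows "vec n (\<lambda>j. z^j - e * z^(n-1-j)) \<noteq> 0\<^sub>v n"
proof
  assume v0: "vec n (\<lambda>j. z^j - e * z^(n-1-j)) = 0\<^sub>v n"
  obtain m where n: "n = Suc (Suc m)" using assms(1) by (metis add_2_eq_Suc le_Suc_ex)
  have "e * z^(Suc m) = 1" "z = e * z^m"
    using arg_cong[OF v0, of "\<lambda>v. v $ 0"] arg_cong[OF v0, of "\<lambda>v. v $ 1"] by (simp_all add: n)
  then have "z^2 = 1"
    by (metis mult.left_commute power2_eq_square power_Suc)
  with assms(2) show False ..
qed

lemma KMS_eigenvector_reflected_powers:
  fixes z \<rho> e :: complex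
  assumes "n \<ge> 2" "\<rho>^2 \<noteq> 1" "z^2 \<noteq> 1"
    and cond: "z^n * (z - \<rho>) = e * (1 - \<rho> * z)" and "e^2 = 1"
  shows "eigenvector (KMS n \<rho>) (vec n (\<lambda>j. z^j - e * z^(n-1-j))) (zero_eigval \<rho> z)"
proof -
  have "e \<noteq> 0" using assms(5) by auto
  moreover have "z \<noteq> 0"
    using cond assms(1) \<open>e \<noteq> 0\<close> by auto
  ultimately show ?thesis
    using boundary_condition_nondegenerate[OF assms(2) \<open>e \<noteq> 0\<close> cond]
      KMS_mult_reflected_powers[OF \<open>z \<noteq> 0\<close> _ _ cond assms(5)] reflected_powers_nonzero[OF assms(1,3)]
    by (simp add: eigenvector_def KMS_def)
qed

lemma eigenvector_smult:
  fixes A :: "'a::field mat"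
  assumes "A \<in> carrier_mat n n" "eigenvector A v k" "c \<noteq> 0"
  shows "eigenvector A (c \<cdot>\<^sub>v v) k"
proof -
  have v: "v \<in> carrier_vec n" "v \<noteq> 0\<^sub>v n" "A *\<^sub>v v = k \<cdot>\<^sub>v v"
    using assms(1,2) by (auto simp: eigenvector_def)
  have "v = inverse c \<cdot>\<^sub>v (c \<cdot>\<^sub>v v)"
    using assms(3) by (simp add: smult_smult_assoc)
  then have "c \<cdot>\<^sub>v v \<noteq> 0\<^sub>v n"
    using v(2) by auto
  moreover have "A *\<^sub>v (c \<cdot>\<^sub>v v) = k \<cdot>\<^sub>v (c \<cdot>\<^sub>v v)"
    using v assms(1) by (simp add: mult_mat_vec smult_smult_assoc mult.commute)
  ultimately show ?thesis
    using v(1) assms(1) by (simp add: eigenvector_def)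
qed

lemma zero_eigval_exp:
  fixes \<rho> \<mu> :: complex
  shows "zero_eigval \<rho> (exp (\<i> * \<mu>)) = (1 - \<rho>^2) / (1 - 2 * \<rho> * cos \<mu> + \<rho>^2)"
proof -
  define z where "z = exp (\<i> * \<mu>)"
  have "z \<noteq> 0" by (simp add: z_def)
  have "cos \<mu> = (z + inverse z) / 2"
    by (simp add: cos_exp_eq z_def exp_minus)
  then have "1 - 2 * \<rho> * cos \<mu> + \<rho>^2 = (z - \<rho>) * (1 - \<rho> * z) / z"
    using \<open>z \<noteq> 0\<close> by (simp add: field_simps power2_eq_square)
  then show ?thesis
    using \<open>z \<noteq> 0\<close> by (simp add: zero_eigval_def z_def[symmetric])
qed

lemma zero_eigval_sin_ratio:
  fixes z \<rho> \<mu> e :: complex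
  assumes z: "z = exp (\<i> * \<mu>)" and "z^2 \<noteq> 1" "z \<noteq> \<rho>" "\<rho> * z \<noteq> 1"
    and cond: "z^n * (z - \<rho>) = e * (1 - \<rho> * z)" and "e^2 = 1"
  shows "zero_eigval \<rho> z = - e * (sin (of_nat n * \<mu>) / sin \<mu>)"
proof -
  have nz: "z \<noteq> 0" "z - \<rho> \<noteq> 0" "1 - \<rho> * z \<noteq> 0" "z * z - 1 \<noteq> 0"
    using assms(2-4) by (auto simp: z power2_eq_square)
  have zn: "z^n = e * ((1 - \<rho> * z) / (z - \<rho>))"
    using cond nz by (simp add: eq_divide_eq)
  have "e * z^n * (z - \<rho>) = e^2 * (1 - \<rho> * z)"
    using cond by (simp add: power2_eq_square mult.assoc)
  then have zn_inv: "inverse (z^n) = e * ((z - \<rho>) / (1 - \<rho> * z))"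
    using nz assms(6) by (simp add: field_simps)
  have "exp (\<i> * (of_nat n * \<mu>)) = z^n"
    by (simp add: z exp_of_nat_mult[symmetric] ac_simps)
  then have "sin (of_nat n * \<mu>) = (z^n - inverse (z^n)) / (2 * \<i>)"
    by (simp add: sin_exp_eq exp_minus)
  moreover have "sin \<mu> = (z - inverse z) / (2 * \<i>)"
    by (simp add: sin_exp_eq z exp_minus)
  ultimately have "sin (of_nat n * \<mu>) / sin \<mu> = (z^n - inverse (z^n)) / (z - inverse z)"
    by simp
  also have "\<dots> = e * (((1 - \<rho> * z) / (z - \<rho>) - (z - \<rho>) / (1 - \<rho> * z)) / (z - inverse z))"
    unfolding zn_inv unfolding zn by (simp only: right_diff_distrib[symmetric] times_divide_eq_right[symmetric])
  also have "((1 - \<rho> * z) / (z - \<rho>) - (z - \<rho>) / (1 - \<rho> * z)) / (z - inverse z) = - zero_eigval \<rho> z"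
  proof -
    define D where "D = (z - \<rho>) * (1 - \<rho> * z)"
    have "D \<noteq> 0" using nz by (simp add: D_def)
    have "(1 - \<rho> * z) / (z - \<rho>) - (z - \<rho>) / (1 - \<rho> * z) = (1 - \<rho>^2) * (1 - z * z) / D"
      using nz by (simp add: D_def field_simps power2_eq_square)
    moreover have "z - inverse z = (z * z - 1) / z"
      using nz by (simp add: field_simps)
    ultimately show ?thesis
      using nz \<open>D \<noteq> 0\<close> by (simp add: zero_eigval_def D_def[symmetric] field_simps power2_eq_square)
  qed
  finally show ?thesis
    using assms(6) by (simp add: power2_eq_square)
qed

lemma vec_exp_centered:
  fixes \<mu> e :: complex
  shows "vec n (\<lambda>j. exp (\<i> * (\<mu> * (of_nat j - (of_nat n - 1) / 2)))
                   - e * exp (- (\<i> * (\<mu> * (of_nat j - (of_nat n - 1) / 2)))))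
       = exp (- (\<i> * \<mu> * (of_nat n - 1) / 2))
           \<cdot>\<^sub>v vec n (\<lambda>j. exp (\<i> * \<mu>) ^ j - e * exp (\<i> * \<mu>) ^ (n-1-j))"
    (is "vec n (\<lambda>j. exp (\<i> * ?\<theta> j) - e * exp (- (\<i> * ?\<theta> j))) = ?c \<cdot>\<^sub>v vec n (\<lambda>j. ?z ^ j - e * ?z ^ (n-1-j))")
proof (rule eq_vecI)
  fix j assume "j < dim_vec (?c \<cdot>\<^sub>v vec n (\<lambda>j. ?z ^ j - e * ?z ^ (n-1-j)))"
  then have j: "j < n" by simp
  have exponents: "\<i> * ?\<theta> j = - (\<i> * \<mu> * (of_nat n - 1) / 2) + of_nat j * (\<i> * \<mu>)"
    "- (\<i> * ?\<theta> j) = - (\<i> * \<mu> * (of_nat n - 1) / 2) + of_nat (n-1-j) * (\<i> * \<mu>)"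
    using j by (simp_all add: of_nat_diff field_simps)
  have "vec n (\<lambda>j. exp (\<i> * ?\<theta> j) - e * exp (- (\<i> * ?\<theta> j))) $ j = exp (\<i> * ?\<theta> j) - e * exp (- (\<i> * ?\<theta> j))"
    using j by simp
  also have "\<dots> = ?c * (?z ^ j - e * ?z ^ (n-1-j))"
    unfolding exponents(2) unfolding exponents(1) exp_add exp_of_nat_mult by (simp add: algebra_simps)
  also have "\<dots> = (?c \<cdot>\<^sub>v vec n (\<lambda>j. ?z ^ j - e * ?z ^ (n-1-j))) $ j"
    using j by simp
  finally show "vec n (\<lambda>j. exp (\<i> * ?\<theta> j) - e * exp (- (\<i> * ?\<theta> j))) $ j
      = (?c \<cdot>\<^sub>v vec n (\<lambda>j. ?z ^ j - e * ?z ^ (n-1-j))) $ j" .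
qed simp

lemma KMS_eigenvector_exp_centered:
  fixes z \<rho> \<mu> e :: complex
  assumes "n \<ge> 2" "\<rho>^2 \<noteq> 1" "z = exp (\<i> * \<mu>)" "z \<noteq> 1" "z \<noteq> -1"
    and cond: "z^n * (z - \<rho>) = e * (1 - \<rho> * z)" and "e^2 = 1"
  shows "eigenvector (KMS n \<rho>)
           (vec n (\<lambda>j. exp (\<i> * (\<mu> * (of_nat j - (of_nat n - 1) / 2)))
                        - e * exp (- (\<i> * (\<mu> * (of_nat j - (of_nat n - 1) / 2))))))
           (zero_eigval \<rho> z)"
    and "zero_eigval \<rho> z = - e * (sin (of_nat n * \<mu>) / sin \<mu>)"
proof -
  have z2: "z^2 \<noteq> 1" using assms(4,5) by (simp add: power2_eq_1_iff)
  have "e \<noteq> 0" using assms(7) by auto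
  show "eigenvector (KMS n \<rho>)
           (vec n (\<lambda>j. exp (\<i> * (\<mu> * (of_nat j - (of_nat n - 1) / 2)))
                        - e * exp (- (\<i> * (\<mu> * (of_nat j - (of_nat n - 1) / 2))))))
           (zero_eigval \<rho> z)"
    unfolding vec_exp_centered assms(3)[symmetric]
    by (rule eigenvector_smult[of _ n, OF _ KMS_eigenvector_reflected_powers[OF assms(1,2) z2 cond assms(7)]])
      (simp_all add: KMS_def)
  show "zero_eigval \<rho> z = - e * (sin (of_nat n * \<mu>) / sin \<mu>)"
    using boundary_condition_nondegenerate[OF assms(2) \<open>e \<noteq> 0\<close> cond]
    by (intro zero_eigval_sin_ratio[OF assms(3) z2 _ _ cond assms(7)])
qed

lemma KMS_eigenvector_sin:
  fixes z \<rho> \<mu> :: complex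
  assumes "n \<ge> 2" "\<rho>^2 \<noteq> 1" "z = exp (\<i> * \<mu>)" "z \<noteq> 1" "z \<noteq> -1" "s_poly n \<rho> z = 0"
  shows "zero_eigval \<rho> z = - (sin (of_nat n * \<mu>) / sin \<mu>)"
    and "eigenvector (KMS n \<rho>) (vec n (\<lambda>j. sin (\<mu> * (of_nat j - (of_nat n - 1) / 2)))) (zero_eigval \<rho> z)"
proof -
  have "z^n * (z - \<rho>) = 1 * (1 - \<rho> * z)"
    using assms(6) by (simp add: s_poly_def algebra_simps)
  note eigen = KMS_eigenvector_exp_centered[OF assms(1-5) this, simplified]
  have "vec n (\<lambda>j. sin (\<mu> * (of_nat j - (of_nat n - 1) / 2))) = (1 / (2 * \<i>)) \<cdot>\<^sub>v
      vec n (\<lambda>j. exp (\<i> * (\<mu> * (of_nat j - (of_nat n - 1) / 2))) - exp (- (\<i> * (\<mu> * (of_nat j - (of_nat n - 1) / 2)))))"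
    by (auto simp: sin_exp_eq)
  then show "eigenvector (KMS n \<rho>) (vec n (\<lambda>j. sin (\<mu> * (of_nat j - (of_nat n - 1) / 2)))) (zero_eigval \<rho> z)"
    using eigenvector_smult[of _ n, OF _ eigen(1)] by (simp add: KMS_def)
  show "zero_eigval \<rho> z = - (sin (of_nat n * \<mu>) / sin \<mu>)"
    using eigen(2) by simp
qed

lemma KMS_eigenvector_cos:
  fixes z \<rho> \<mu> :: complex
  assumes "n \<ge> 2" "\<rho>^2 \<noteq> 1" "z = exp (\<i> * \<mu>)" "z \<noteq> 1" "z \<noteq> -1" "c_poly n \<rho> z = 0"
  shows "zero_eigval \<rho> z = sin (of_nat n * \<mu>) / sin \<mu>"
    and "eigenvector (KMS n \<rho>) (vec n (\<lambda>j. cos (\<mu> * (of_nat j - (of_nat n - 1) / 2)))) (zero_eigval \<rho> z)"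
proof -
  have "z^n * (z - \<rho>) = -1 * (1 - \<rho> * z)"
    using assms(6) by (simp add: c_poly_def algebra_simps)
  note eigen = KMS_eigenvector_exp_centered[OF assms(1-5) this, simplified]
  have "vec n (\<lambda>j. cos (\<mu> * (of_nat j - (of_nat n - 1) / 2))) = (1 / 2) \<cdot>\<^sub>v
      vec n (\<lambda>j. exp (\<i> * (\<mu> * (of_nat j - (of_nat n - 1) / 2))) + exp (- (\<i> * (\<mu> * (of_nat j - (of_nat n - 1) / 2)))))"
    by (auto simp: cos_exp_eq)
  then show "eigenvector (KMS n \<rho>) (vec n (\<lambda>j. cos (\<mu> * (of_nat j - (of_nat n - 1) / 2)))) (zero_eigval \<rho> z)"
    using eigenvector_smult[of _ n, OF _ eigen(1)] by (simp add: KMS_def)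
  show "zero_eigval \<rho> z = sin (of_nat n * \<mu>) / sin \<mu>"
    using eigen(2) by simp
qed

theorem theorem4p1:
  fixes n :: nat and \<rho> z \<mu> :: complex
  assumes n2: "n \<ge> 2"
    and rho: "\<rho> \<notin> {- (of_nat (n+1) / of_nat (n-1)), -1, 1, of_nat (n+1) / of_nat (n-1)}"
    and z0: "z \<noteq> 0"
    and zmu: "z = exp (\<i> * \<mu>)"
  shows
   "(type1_zero n \<rho> z \<longleftrightarrow>
       z \<noteq> 1 \<and> z \<noteq> -1 \<and>
       sin (\<mu> * of_nat (n+1) / 2) - \<rho> * sin (\<mu> * of_nat (n-1) / 2) = 0)
    \<and> (type1_zero n \<rho> z \<longrightarrow>
       zero_eigval \<rho> z = (1 - \<rho>^2) / (1 - 2 * \<rho> * cos \<mu> + \<rho>^2)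
     \<and> zero_eigval \<rho> z = - (sin (of_nat n * \<mu>) / sin \<mu>)
     \<and> eigenvector (KMS n \<rho>)
         (vec n (\<lambda>j. sin (\<mu> * (of_nat j - (of_nat n - 1) / 2)))) (zero_eigval \<rho> z))
    \<and> (type2_zero n \<rho> z \<longleftrightarrow>
       z \<noteq> 1 \<and> z \<noteq> -1 \<and>
       cos (\<mu> * of_nat (n+1) / 2) - \<rho> * cos (\<mu> * of_nat (n-1) / 2) = 0)
    \<and> (type2_zero n \<rho> z \<longrightarrow>
       zero_eigval \<rho> z = (1 - \<rho>^2) / (1 - 2 * \<rho> * cos \<mu> + \<rho>^2)
     \<and> zero_eigval \<rho> z = sin (of_nat n * \<mu>) / sin \<mu>
     \<and> eigenvector (KMS n \<rho>)
         (vec n (\<lambda>j. cos (\<mu> * (of_nat j - (of_nat n - 1) / 2)))) (zero_eigval \<rho> z))"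
proof -
  have n1: "n \<ge> 1" and rho2: "\<rho>^2 \<noteq> 1"
    using n2 rho by (auto simp: power2_eq_1_iff)
  have type1: "type1_zero n \<rho> z \<longleftrightarrow> z \<noteq> 1 \<and> z \<noteq> -1 \<and> s_poly n \<rho> z = 0"
    and type2: "type2_zero n \<rho> z \<longleftrightarrow> z \<noteq> 1 \<and> z \<noteq> -1 \<and> c_poly n \<rho> z = 0"
    using type1_zero_iff[OF n1 z0] type2_zero_iff[OF n1 z0] p2n_pm_one_nonzero[OF n2 rho] by auto
  have "s_poly n \<rho> z = 0 \<longleftrightarrow> sin (\<mu> * of_nat (n+1) / 2) - \<rho> * sin (\<mu> * of_nat (n-1) / 2) = 0"
    and "c_poly n \<rho> z = 0 \<longleftrightarrow> cos (\<mu> * of_nat (n+1) / 2) - \<rho> * cos (\<mu> * of_nat (n-1) / 2) = 0"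
    unfolding zmu s_poly_exp[OF n1] c_poly_exp[OF n1] by simp_all
  moreover have "zero_eigval \<rho> z = (1 - \<rho>^2) / (1 - 2 * \<rho> * cos \<mu> + \<rho>^2)"
    unfolding zmu by (rule zero_eigval_exp)
  ultimately show ?thesis
    using type1 type2 KMS_eigenvector_sin[OF n2 rho2 zmu] KMS_eigenvector_cos[OF n2 rho2 zmu] by blast
qed

end
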